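(* Let $m$ be a positive integer and $h$ a positive integer, and assume that the ternary (base-3) expansion of $4^m$ contains no block of $h$ consecutive digits all equal to $0$, and no block of $h$ consecutive digits all equal to $2$. Then the inequality $$\biggl\|\biggl(\frac43\biggr)^k\biggr\| \ge \biggl(\frac49\biggr)^k$$ holds for all integers $k$ satisfying $$m\,\frac{\log 4}{\log 9} + \frac h2 \le k \le m,$$ where $\|x\|$ denotes the distance from the real number $x$ to the nearest integer.
   Context: $\|x\| = \min_{n\in\mathbb Z}|x-n|$ for real $x$. The ternary expansion is the standard base-3 representation of the positive integer $4^m$ (with digits in $\{0,1,2\}$, no leading zeros beyond the representation). *)

theory Defs
  imports "HOL-Analysis.Analysis"
begin

text \<open>Base-3 digits of a natural number, least significant digit first;
  the representation of 0 is the empty list (irrelevant here since 4^m > 0).\<close>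
fun ternary_digits :: "nat \<Rightarrow> nat list" where
  "ternary_digits n = (if n = 0 then [] else n mod 3 # ternary_digits (n div 3))"

declare ternary_digits.simps [simp del]

definition has_block :: "nat list \<Rightarrow> nat \<Rightarrow> nat \<Rightarrow> bool" where
  "has_block ds h d \<longleftrightarrow> (\<exists>i. i + h \<le> length ds \<and> (\<forall>j<h. ds ! (i + j) = d))"

definition dist_int :: "real \<Rightarrow> real" where
  "dist_int x = (INF n::int. \<bar>x - of_int n\<bar>)"

end

theory Submission imports Defs begin

text \<open>If \<open>(4/3)^k\<close> is within \<open>(4/9)^k\<close> of an integer \<open>n\<close>, then \<open>4^k - n 3^k\<close> is an
  integer of absolute value below \<open>(4/3)^k\<close>; multiplying by \<open>4^(m-k)\<close> shows that
  \<open>4^m\<close> is congruent modulo \<open>3^k\<close> to an integer of absolute value below \<open>4^m / 3^k\<close>,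
  which the hypothesis on \<open>k\<close> bounds by \<open>3^(k-h)\<close>. So the residue of \<open>4^m\<close> modulo
  \<open>3^k\<close> is either below \<open>3^(k-h)\<close> or at least \<open>3^k - 3^(k-h)\<close>, i.e. the ternary
  digits of \<open>4^m\<close> in positions \<open>k-h, \<dots>, k-1\<close> are all \<open>0\<close> or all \<open>2\<close>.\<close>

lemma ternary_digits_nth:
  "3 ^ i \<le> n \<Longrightarrow> i < length (ternary_digits n) \<and> ternary_digits n ! i = n div 3 ^ i mod 3"
proof (induction i arbitrary: n)
  case 0
  then have "ternary_digits n = n mod 3 # ternary_digits (n div 3)"
    by (subst ternary_digits.simps) simp
  then show ?case by simp
next
  case (Suc i)
  then have "3 ^ i \<le> n div 3"
    by (simp add: less_eq_div_iff_mult_less_eq mult.commute)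
  moreover have "ternary_digits n = n mod 3 # ternary_digits (n div 3)"
    using Suc.prems by (subst ternary_digits.simps) (auto intro: Nat.gr0I)
  ultimately show ?case
    using Suc.IH by (simp add: div_mult2_eq)
qed

lemma digit_mod_power:
  fixes N b :: nat
  assumes "p < k"
  shows "N mod b ^ k div b ^ p mod b = N div b ^ p mod b"
proof -
  have digit: "a div b ^ p mod b = a mod b ^ Suc p div b ^ p" for a :: nat
  proof (cases "b = 0")
    case True then show ?thesis by (cases p) simp_all
  next
    case False then show ?thesis
      using mod_mult2_eq[of a "b ^ p" b] by (simp add: mult.commute)
  qed
  have "b ^ Suc p dvd b ^ k"
    using assms by (intro le_imp_power_dvd) simp
  then show ?thesis
    by (simp only: digit mod_mod_cancel)
qed

lemma has_block_of_digits_mod_power: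
  fixes N k h d :: nat
  assumes "h \<le> k" "0 < k" "3 ^ (k - 1) \<le> N"
    and digits: "\<And>p. k - h \<le> p \<Longrightarrow> p < k \<Longrightarrow> N mod 3 ^ k div 3 ^ p mod 3 = d"
  shows "has_block (ternary_digits N) h d"
  unfolding has_block_def
proof (intro exI conjI allI impI)
  show "k - h + h \<le> length (ternary_digits N)"
    using ternary_digits_nth[OF assms(3)] assms(1,2) by linarith
  fix j assume "j < h"
  then have p: "k - h \<le> k - h + j" "k - h + j < k"
    using assms(1) by simp_all
  then have "3 ^ (k - h + j) \<le> N"
    using assms(3) power_increasing[of "k - h + j" "k - 1" "3::nat"] by linarith
  then show "ternary_digits N ! (k - h + j) = d"
    using ternary_digits_nth digit_mod_power[OF p(2)] digits[OF p] by simp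
qed

lemma digit_eq_0_if_less_power:
  fixes R b :: nat
  assumes "R < b ^ q" "q \<le> p"
  shows "R div b ^ p mod b = 0"
proof (cases "b = 0")
  case False
  then have "R < b ^ p"
    using assms power_increasing[of q p b] by linarith
  then show ?thesis by simp
qed (use assms in \<open>simp add: power_0_left split: if_splits\<close>)

lemma digit_eq_max_if_ge_power_diff:
  fixes R b :: nat
  assumes "b ^ k - b ^ q \<le> R" "R < b ^ k" "q \<le> p" "p < k"
  shows "R div b ^ p mod b = b - 1"
proof -
  obtain s where "k = p + Suc s"
    using less_imp_Suc_add[OF assms(4)] by auto
  then have k: "b ^ k = b ^ p * (b * b ^ s)"
    by (simp add: power_add)
  have "b > 0"
  proof (rule gr0I)
    assume "b = 0"
    with assms(2,4) k show False by (simp add: zero_power)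
  qed
  have "b ^ p * (b * b ^ s - 1) = b ^ k - b ^ p"
    using k by (simp add: right_diff_distrib')
  also have "\<dots> \<le> R"
    using assms(1,3) power_increasing[of q p b] \<open>b > 0\<close> by linarith
  finally have "b * b ^ s - 1 \<le> R div b ^ p"
    using \<open>b > 0\<close> by (simp add: less_eq_div_iff_mult_less_eq mult.commute)
  moreover have "R div b ^ p < b * b ^ s"
    using assms(2) k \<open>b > 0\<close> by (simp add: div_less_iff_less_mult mult.commute)
  ultimately have "R div b ^ p = b * (b ^ s - 1) + (b - 1)"
    using \<open>b > 0\<close> by (simp add: right_diff_distrib')
  then have "R div b ^ p mod b = (b - 1) mod b"
    by (simp only: mod_mult_self4)
  then show ?thesis
    using \<open>b > 0\<close> by simp
qed

lemma nat_mod_near_multiple: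
  fixes a M q :: nat and E :: int
  assumes "int a mod int M = E mod int M" "\<bar>E\<bar> < int q" "q \<le> M"
  shows "a mod M < q \<or> M - q \<le> a mod M"
proof -
  have "int (a mod M) = E mod int M"
    using assms(1) by (simp add: of_nat_mod)
  moreover have "E mod int M = E \<or> E mod int M = E + int M"
  proof (cases "E \<ge> 0")
    case True
    then show ?thesis
      using assms(2,3) by simp
  next
    case False
    have "E mod int M = (E + int M) mod int M"
      by simp
    also have "\<dots> = E + int M"
      using False assms(2,3) by (intro mod_pos_pos_trivial) simp_all
    finally show ?thesis ..
  qed
  ultimately show ?thesis
    using assms(2,3) by (auto simp: abs_less_iff)
qed

lemma has_block_if_residue_extreme:
  fixes N k h :: nat
  assumes "h \<le> k" "0 < k" "3 ^ (k - 1) \<le> N"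
    and "N mod 3 ^ k < 3 ^ (k - h) \<or> 3 ^ k - 3 ^ (k - h) \<le> N mod 3 ^ k"
  shows "has_block (ternary_digits N) h 0 \<or> has_block (ternary_digits N) h 2"
  using assms(4)
proof
  assume "N mod 3 ^ k < 3 ^ (k - h)"
  then have "has_block (ternary_digits N) h 0"
    using assms(1-3) by (intro has_block_of_digits_mod_power digit_eq_0_if_less_power)
  then show ?thesis ..
next
  assume "3 ^ k - 3 ^ (k - h) \<le> N mod 3 ^ k"
  then have "has_block (ternary_digits N) h (3 - 1)"
    using assms(1-3) by (intro has_block_of_digits_mod_power digit_eq_max_if_ge_power_diff) simp_all
  then show ?thesis by simp
qed

lemma near_integer_power_congruence:
  fixes a b m k :: nat and n :: int
  assumes "0 < a" "0 < b" "k \<le> m"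
    and near: "\<bar>(a / b) ^ k - n\<bar> < (a / b ^ 2) ^ k"
  shows "\<exists>E. int a ^ m mod int b ^ k = E mod int b ^ k \<and> \<bar>E\<bar> * int b ^ k < int a ^ m"
proof -
  define e where "e = int a ^ k - n * int b ^ k"
  have bk: "real b ^ k > 0"
    using assms(2) by simp
  have "(a / b) ^ k - n = e / b ^ k"
    using bk by (simp add: e_def power_divide diff_divide_distrib)
  moreover have "(a / b ^ 2) ^ k = a ^ k / b ^ k / b ^ k"
    by (simp add: power_divide power2_eq_square power_mult_distrib)
  ultimately have "\<bar>real_of_int e\<bar> / b ^ k < a ^ k / b ^ k / b ^ k"
    using near by (simp add: abs_divide)
  then have "real_of_int (\<bar>e\<bar> * int b ^ k) < real_of_int (int a ^ k)"
    using bk assms(2) by (simp add: divide_less_cancel pos_less_divide_eq split: if_splits)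
  then have e_bound: "\<bar>e\<bar> * int b ^ k < int a ^ k"
    by (simp only: of_int_less_iff)
  define E where "E = int a ^ (m - k) * e"
  have "int a ^ m = (int a ^ (m - k) * n) * int b ^ k + E"
    using assms(3) by (simp add: E_def e_def algebra_simps flip: power_add)
  then have "int a ^ m mod int b ^ k = E mod int b ^ k"
    by (simp only: mod_mult_self3)
  moreover have "\<bar>E\<bar> * int b ^ k < int a ^ m"
  proof -
    have "\<bar>E\<bar> * int b ^ k = int a ^ (m - k) * (\<bar>e\<bar> * int b ^ k)"
      by (simp add: E_def abs_mult)
    also have "\<dots> < int a ^ (m - k) * int a ^ k"
      using e_bound assms(1) by (intro mult_strict_left_mono) simp_all
    finally show ?thesis
      using assms(3) by (simp flip: power_add)
  qed
  ultimately show ?thesis by blast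
qed

lemma power_bound_of_log_bound:
  fixes m h k :: nat
  assumes "real m * ln 4 / ln 9 + real h / 2 \<le> real k"
  shows "4 ^ m * 3 ^ h \<le> (9::nat) ^ k"
proof -
  have ln9: "ln (9::real) = 2 * ln 3"
    using ln_realpow[of 3 2] by simp
  have "ln (real (4 ^ m * 3 ^ h)) = (real m * ln 4 / ln 9 + real h / 2) * ln 9"
    using ln9 by (simp add: ln_mult ln_realpow field_simps)
  also have "\<dots> \<le> real k * ln 9"
    using assms by (intro mult_right_mono) simp_all
  also have "\<dots> = ln (real (9 ^ k))"
    by (simp add: ln_realpow)
  finally have "real (4 ^ m * 3 ^ h) \<le> real (9 ^ k)"
    by (subst (asm) ln_le_cancel_iff) simp_all
  then show ?thesis
    by (simp only: of_nat_le_iff)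
qed

lemma dist_int_four_thirds_power_ge:
  fixes m h k :: nat
  assumes "0 < h" "k \<le> m" and bound: "4 ^ m * 3 ^ h \<le> (9::nat) ^ k"
    and "\<not> has_block (ternary_digits (4 ^ m)) h 0" "\<not> has_block (ternary_digits (4 ^ m)) h 2"
  shows "(4 / 9) ^ k \<le> dist_int ((4 / 3) ^ k)"
proof -
  have "k \<noteq> 0"
  proof
    assume "k = 0"
    have "(3::nat) \<le> 3 ^ h"
      using assms(1) power_increasing[of 1 h "3::nat"] by simp
    also have "\<dots> \<le> 4 ^ m * 3 ^ h"
      by simp
    finally show False
      using bound \<open>k = 0\<close> by simp
  qed
  have "h < k"
  proof (rule ccontr)
    assume "\<not> h < k"
    then have "4 ^ k * 3 ^ k \<le> (4::nat) ^ m * 3 ^ h"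
      using assms(2) by (intro mult_le_mono power_increasing) simp_all
    also have "\<dots> \<le> 9 ^ k"
      by (fact bound)
    also have "\<dots> < 4 ^ k * 3 ^ k"
      using \<open>k \<noteq> 0\<close> power_strict_mono[of 9 12 k] by (simp flip: power_mult_distrib)
    finally show False by simp
  qed
  have "(3::nat) ^ (k - 1) \<le> 3 ^ m"
    using assms(2) by (simp add: power_increasing)
  also have "\<dots> \<le> 4 ^ m"
    by (simp add: power_mono)
  finally have "3 ^ (k - 1) \<le> (4::nat) ^ m" .
  have near: "(4 / 9) ^ k \<le> \<bar>(4 / 3) ^ k - real_of_int n\<bar>" for n
  proof (rule ccontr)
    assume "\<not> ?thesis"
    then obtain E :: int where E: "4 ^ m mod 3 ^ k = E mod 3 ^ k" "\<bar>E\<bar> * 3 ^ k < 4 ^ m"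
      using near_integer_power_congruence[of 4 3 k m n] assms(2) by auto
    have "\<bar>E\<bar> * 3 ^ k * 3 ^ h < 3 ^ (k - h) * 3 ^ k * 3 ^ h"
    proof -
      have "\<bar>E\<bar> * 3 ^ k * 3 ^ h < 4 ^ m * 3 ^ h"
        using E(2) by simp
      also have "\<dots> \<le> 9 ^ k"
        using bound of_nat_le_iff[of "4 ^ m * 3 ^ h" "9 ^ k", where 'a = int] by simp
      also have "\<dots> = 3 ^ k * 3 ^ k"
        by (simp flip: power_mult_distrib)
      also have "\<dots> = 3 ^ (k - h) * 3 ^ k * 3 ^ h"
        using \<open>h < k\<close> by (simp flip: power_add)
      finally show ?thesis .
    qed
    then have "\<bar>E\<bar> < 3 ^ (k - h)"
      by simp
    moreover have "int (4 ^ m) mod int (3 ^ k) = E mod int (3 ^ k)"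
      using E(1) by simp
    ultimately have "(4::nat) ^ m mod 3 ^ k < 3 ^ (k - h) \<or> 3 ^ k - 3 ^ (k - h) \<le> (4::nat) ^ m mod 3 ^ k"
      by (intro nat_mod_near_multiple) (simp_all add: power_increasing)
    then have "has_block (ternary_digits (4 ^ m)) h 0 \<or> has_block (ternary_digits (4 ^ m)) h 2"
      using \<open>h < k\<close> \<open>k \<noteq> 0\<close> \<open>3 ^ (k - 1) \<le> 4 ^ m\<close>
      by (intro has_block_if_residue_extreme) simp_all
    with assms(4,5) show False
      by simp
  qed
  show ?thesis
    unfolding dist_int_def by (rule cINF_greatest) (simp_all add: near)
qed

theorem lemma1:
  fixes m h :: nat
  assumes "0 < m" and "0 < h"
    and "\<not> has_block (ternary_digits (4 ^ m)) h 0"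
    and "\<not> has_block (ternary_digits (4 ^ m)) h 2"
  shows "\<forall>k::int. real m * ln 4 / ln 9 + real h / 2 \<le> real_of_int k \<and> k \<le> int m \<longrightarrow>
           dist_int ((4 / 3) powi k) \<ge> (4 / 9) powi k"
proof (intro allI impI)
  fix k :: int
  assume k: "real m * ln 4 / ln 9 + real h / 2 \<le> real_of_int k \<and> k \<le> int m"
  moreover have "0 \<le> real m * ln 4 / ln 9 + real h / 2"
    by simp
  ultimately have "0 \<le> k"
    by linarith
  then obtain n :: nat where n: "k = int n"
    using zero_le_imp_eq_int by blast
  then have "4 ^ m * 3 ^ h \<le> (9::nat) ^ n"
    using k by (intro power_bound_of_log_bound) simp
  then show "dist_int ((4 / 3) powi k) \<ge> (4 / 9) powi k"
    using dist_int_four_thirds_power_ge[of h n m] assms(2-4) k n by simp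
qed

end
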